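(* Let $\varphi$ be a rational function of degree $n$ which is univalent on a neighborhood of $\overline{\mathbb D}$, let $\Omega:=\varphi(\mathbb D)$ and $\Gamma:=\partial\Omega=\varphi(\partial\mathbb D)$. For $t\in\widehat{\mathbb C}$ let $\{R(t)\}$ denote the collection $\{\varphi(1/\bar\zeta):\zeta\in\widehat{\mathbb C},\ \varphi(\zeta)=t\}$ (with $1/\bar 0=\infty$, $1/\bar\infty=0$), and let $B$ be the finite set of $t\in\widehat{\mathbb C}$ for which $\varphi(\zeta)=t$ has fewer than $n$ distinct solutions. Then: (i) if $t\in\widehat{\mathbb C}\setminus(\overline\Omega\cup B)$, then $\{R(t)\}\subset\Omega$; (ii) if $t\in\Gamma\setminus B$, then exactly one point of $\{R(t)\}$, namely $t$ itself, lies on $\Gamma$, and the remaining $n-1$ points lie in $\Omega$.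
   Context: $\mathbb D$ is the open unit disk. The degree of $\varphi=p/q$ ($p,q$ polynomials without common zeros) is $\max(\deg p,\deg q)$. $\{R(t)\}$ is the set of values at $t$ of the multivalued anticonformal reflection $R=\overline S$ of $\Gamma$, where the Schwarz function $S$ of $\Gamma$ satisfies $S(\varphi(\zeta))=\overline{\varphi(1/\bar\zeta)}$; in particular $R(\zeta)=\zeta$ on $\Gamma$ for the principal branch. *)

theory Defs
  imports "HOL-Analysis.Analysis" "HOL-Computational_Algebra.Polynomial"
begin

text \<open>The Riemann sphere: \<open>None\<close> is the point at infinity.\<close>
type_synonym ecomplex = "complex option"

text \<open>A rational function \<open>p/q\<close> (p, q without common zeros, q nonzero) on the sphere.\<close>
definition rat_fun :: "complex poly \<Rightarrow> complex poly \<Rightarrow> ecomplex \<Rightarrow> ecomplex" where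
  "rat_fun p q z = (case z of
      Some w \<Rightarrow> (if poly q w = 0 then None else Some (poly p w / poly q w))
    | None \<Rightarrow> (if degree p > degree q then None
              else if degree p = degree q then Some (lead_coeff p / lead_coeff q)
              else Some 0))"

definition rat_degree :: "complex poly \<Rightarrow> complex poly \<Rightarrow> nat" where
  "rat_degree p q = max (degree p) (degree q)"

definition sphere_reflect :: "ecomplex \<Rightarrow> ecomplex" where
  "sphere_reflect z = (case z of
      None \<Rightarrow> Some 0
    | Some w \<Rightarrow> (if w = 0 then None else Some (1 / cnj w)))"

definition branch_values :: "complex poly \<Rightarrow> complex poly \<Rightarrow> ecomplex set" where
  "branch_values p q = {t. card {\<zeta>. rat_fun p q \<zeta> = t} < rat_degree p q}"

end

theory Submission
  imports Defs
begin

text \<open>Every point of the sphere either lies in the closed unit disc or is reflected into the open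
  one. A preimage of a value outside \<open>\<phi>(closed disc)\<close> is therefore of the second kind, and its
  reflection is mapped into \<open>\<Omega>\<close>. For \<open>w = \<phi> z\<^sub>0\<close> with \<open>|z\<^sub>0| = 1\<close>, univalence on the closed disc makes
  \<open>z\<^sub>0\<close> the only preimage of the first kind; it is fixed by the reflection, while the reflections
  of all other preimages land in the open disc, whose image misses \<open>\<Gamma>\<close>, again by univalence.
  The fibre has exactly \<open>n\<close> points because \<open>w \<notin> B\<close> and because \<open>p - w q\<close> has at most \<open>n\<close> roots,
  one fewer when \<open>\<infinity>\<close> is itself a preimage.\<close>

lemma rat_fun_Some_eq: "poly q z \<noteq> 0 \<Longrightarrow> rat_fun p q (Some z) = Some (poly p z / poly q z)"
  by (simp add: rat_fun_def)

lemma sphere_reflect_unit_circle: "cmod z = 1 \<Longrightarrow> sphere_reflect (Some z) = Some z"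
proof -
  assume "cmod z = 1"
  then have "z \<noteq> 0" and "z * cnj z = 1"
    using complex_norm_square[of z] by auto
  then show ?thesis by (simp add: sphere_reflect_def field_simps)
qed

lemma cdisc_or_sphere_reflect_disc:
  "(\<exists>z. \<zeta> = Some z \<and> cmod z \<le> 1) \<or> (\<exists>y. sphere_reflect \<zeta> = Some y \<and> cmod y < 1)"
proof (cases \<zeta>)
  case None
  then show ?thesis by (simp add: sphere_reflect_def)
next
  case (Some z)
  show ?thesis
  proof (cases "cmod z \<le> 1")
    case False
    then have "sphere_reflect \<zeta> = Some (1 / cnj z)" and "cmod (1 / cnj z) < 1"
      using Some by (auto simp: sphere_reflect_def norm_divide divide_less_eq)
    then show ?thesis by blast
  qed (use Some in auto)
qed

lemma rat_fun_or_reflect_in_disc_image: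
  assumes no_poles: "\<And>z. cmod z \<le> 1 \<Longrightarrow> poly q z \<noteq> 0"
  shows "rat_fun p q \<zeta> \<in> Some ` (\<lambda>z. poly p z / poly q z) ` cball 0 1
    \<or> rat_fun p q (sphere_reflect \<zeta>) \<in> Some ` (\<lambda>z. poly p z / poly q z) ` ball 0 1"
  using cdisc_or_sphere_reflect_disc[of \<zeta>]
  by (auto simp: rat_fun_Some_eq no_poles)

lemma rat_fun_fibre_of_circle_point:
  fixes p q :: "complex poly"
  defines "\<phi> \<equiv> \<lambda>z. poly p z / poly q z"
  assumes no_poles: "\<And>z. cmod z \<le> 1 \<Longrightarrow> poly q z \<noteq> 0"
    and inj: "inj_on \<phi> (cball 0 1)"
    and z0: "cmod z0 = 1" and fibre: "rat_fun p q \<zeta> = Some (\<phi> z0)"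
  shows "\<zeta> = Some z0
    \<or> rat_fun p q (sphere_reflect \<zeta>) \<in> Some ` \<phi> ` ball 0 1 - Some ` \<phi> ` sphere 0 1"
  using cdisc_or_sphere_reflect_disc[of \<zeta>]
proof
  assume "\<exists>z. \<zeta> = Some z \<and> cmod z \<le> 1"
  then obtain z where z: "\<zeta> = Some z" "cmod z \<le> 1" by blast
  then have "\<phi> z = \<phi> z0"
    using fibre by (simp add: rat_fun_Some_eq no_poles \<phi>_def)
  with inj z z0 have "z = z0" by (auto simp: inj_on_def)
  with z show ?thesis by simp
next
  assume "\<exists>y. sphere_reflect \<zeta> = Some y \<and> cmod y < 1"
  then obtain y where y: "sphere_reflect \<zeta> = Some y" "cmod y < 1" by blast
  have "\<phi> y \<notin> \<phi> ` sphere 0 1"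
  proof
    assume "\<phi> y \<in> \<phi> ` sphere 0 1"
    then obtain x where "cmod x = 1" "\<phi> y = \<phi> x" by auto
    with inj y(2) have "y = x" by (auto intro: inj_onD)
    with \<open>cmod x = 1\<close> y(2) show False by simp
  qed
  with y show ?thesis by (auto simp: rat_fun_Some_eq no_poles \<phi>_def)
qed

lemma reflections_of_fibre_over_circle:
  fixes p q :: "complex poly"
  defines "\<phi> \<equiv> \<lambda>z. poly p z / poly q z"
  assumes no_poles: "\<And>z. cmod z \<le> 1 \<Longrightarrow> poly q z \<noteq> 0"
    and inj: "inj_on \<phi> (cball 0 1)" and w: "w \<in> \<phi> ` sphere 0 1"
  shows "(\<exists>!\<zeta>. rat_fun p q \<zeta> = Some w \<and> rat_fun p q (sphere_reflect \<zeta>) \<in> Some ` \<phi> ` sphere 0 1)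
    \<and> (\<forall>\<zeta>. rat_fun p q \<zeta> = Some w \<and> rat_fun p q (sphere_reflect \<zeta>) \<in> Some ` \<phi> ` sphere 0 1
          \<longrightarrow> rat_fun p q (sphere_reflect \<zeta>) = Some w)
    \<and> (\<forall>\<zeta>. rat_fun p q \<zeta> = Some w \<and> rat_fun p q (sphere_reflect \<zeta>) \<notin> Some ` \<phi> ` sphere 0 1
          \<longrightarrow> rat_fun p q (sphere_reflect \<zeta>) \<in> Some ` \<phi> ` ball 0 1)"
proof -
  obtain z0 where z0: "cmod z0 = 1" "w = \<phi> z0" using w by auto
  have z0_fixed: "rat_fun p q (Some z0) = Some w" "rat_fun p q (sphere_reflect (Some z0)) = Some w"
    using z0 by (simp_all add: sphere_reflect_unit_circle rat_fun_Some_eq no_poles \<phi>_def)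
  have fibre: "\<zeta> = Some z0
      \<or> rat_fun p q (sphere_reflect \<zeta>) \<in> Some ` \<phi> ` ball 0 1 - Some ` \<phi> ` sphere 0 1"
    if "rat_fun p q \<zeta> = Some w" for \<zeta>
    using rat_fun_fibre_of_circle_point[OF no_poles inj[unfolded \<phi>_def] z0(1)] that z0(2)
    unfolding \<phi>_def by blast
  have "Some w \<in> Some ` \<phi> ` sphere 0 1" using w by simp
  with z0_fixed fibre show ?thesis
    by (metis DiffD1 DiffD2)
qed

lemma rat_fun_Some_eq_imp_root:
  "rat_fun p q (Some x) = Some w \<Longrightarrow> poly (p - smult w q) x = 0"
  by (auto simp: rat_fun_def field_simps split: if_splits)

lemma degree_diff_smult_less_if_rat_fun_infinity:
  assumes "q \<noteq> 0" and infty: "rat_fun p q None = Some w" and "p \<noteq> smult w q"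
  shows "degree (p - smult w q) < rat_degree p q"
proof (cases "degree p = degree q")
  case True
  define r where "r = p - smult w q"
  have "r \<noteq> 0" using \<open>p \<noteq> smult w q\<close> by (simp add: r_def)
  have deg_le: "degree r \<le> degree q"
    unfolding r_def by (rule degree_diff_le) (use True degree_smult_le in auto)
  have "w = lead_coeff p / lead_coeff q" using True infty by (simp add: rat_fun_def)
  then have "coeff r (degree q) = 0"
    using True \<open>q \<noteq> 0\<close> by (simp add: r_def)
  with \<open>r \<noteq> 0\<close> have "degree r \<noteq> degree q"
    by (metis leading_coeff_0_iff)
  with deg_le True show ?thesis by (simp add: r_def rat_degree_def)
next
  case False
  with infty have "degree p < degree q" "w = 0"
    by (auto simp: rat_fun_def split: if_splits)
  then show ?thesis by (simp add: rat_degree_def)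
qed

lemma card_rat_fun_fibre_le:
  assumes "q \<noteq> 0" and "p \<noteq> smult w q"
  shows "card {\<zeta>. rat_fun p q \<zeta> = Some w} \<le> rat_degree p q"
proof -
  let ?r = "p - smult w q"
  let ?roots = "{x. poly ?r x = 0}"
  let ?at_infinity = "if rat_fun p q None = Some w then {None :: ecomplex} else {}"
  have "?r \<noteq> 0" using assms(2) by simp
  then have fin: "finite ?roots" and card_roots: "card ?roots \<le> degree ?r"
    using poly_roots_finite card_poly_roots_bound by blast+
  have fibre_sub: "{\<zeta>. rat_fun p q \<zeta> = Some w} \<subseteq> Some ` ?roots \<union> ?at_infinity"
  proof
    fix \<zeta> assume "\<zeta> \<in> {\<zeta>. rat_fun p q \<zeta> = Some w}"
    then show "\<zeta> \<in> Some ` ?roots \<union> ?at_infinity"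
      by (cases \<zeta>) (auto dest: rat_fun_Some_eq_imp_root)
  qed
  have "card {\<zeta>. rat_fun p q \<zeta> = Some w} \<le> card (Some ` ?roots \<union> ?at_infinity)"
    using fin by (intro card_mono[OF _ fibre_sub]) simp
  also have "\<dots> \<le> card (Some ` ?roots) + card ?at_infinity"
    by (rule card_Un_le)
  also have "\<dots> \<le> degree ?r + (if rat_fun p q None = Some w then 1 else 0)"
    using card_roots by (simp add: card_image)
  also have "\<dots> \<le> rat_degree p q"
  proof (cases "rat_fun p q None = Some w")
    case True
    then show ?thesis
      using degree_diff_smult_less_if_rat_fun_infinity assms by fastforce
  next
    case False
    have "degree ?r \<le> rat_degree p q"
      unfolding rat_degree_def
      by (metis degree_diff_le_max degree_smult_le max.mono order.refl order_trans)
    with False show ?thesis by simp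
  qed
  finally show ?thesis .
qed

lemma ne_smult_if_inj_on_quotient:
  fixes p q :: "complex poly"
  assumes "inj_on (\<lambda>z. poly p z / poly q z) S"
    and "a \<in> S" "b \<in> S" "a \<noteq> b" "poly q a \<noteq> 0" "poly q b \<noteq> 0"
  shows "p \<noteq> smult w q"
proof
  assume "p = smult w q"
  then have "poly p a / poly q a = poly p b / poly q b"
    using assms(5,6) by simp
  then show False
    using inj_onD[OF assms(1)] assms(2-4) by blast
qed

lemma card_rat_fun_fibre_eq_rat_degree:
  assumes "q \<noteq> 0" and "p \<noteq> smult w q" and "Some w \<notin> branch_values p q"
  shows "card {\<zeta>. rat_fun p q \<zeta> = Some w} = rat_degree p q"
  using card_rat_fun_fibre_le[OF assms(1,2)] assms(3) by (simp add: branch_values_def)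

theorem lemma3p12:
  fixes p q :: "complex poly" and U :: "complex set"
  defines "\<phi> \<equiv> (\<lambda>z. poly p z / poly q z)"
  defines "n \<equiv> rat_degree p q"
  defines "\<Omega> \<equiv> \<phi> ` ball 0 1"
  defines "\<Gamma> \<equiv> \<phi> ` sphere 0 1"
  defines "B \<equiv> branch_values p q"
  assumes q_nz: "q \<noteq> 0"
    and coprime: "\<And>z. \<not> (poly p z = 0 \<and> poly q z = 0)"
    and U_open: "open U" and U_sup: "cball 0 1 \<subseteq> U"
    and no_poles: "\<And>z. z \<in> U \<Longrightarrow> poly q z \<noteq> 0"
    and univalent: "inj_on \<phi> U"
  shows
    "(\<forall>t. t \<notin> Some ` closure \<Omega> \<and> t \<notin> B \<longrightarrow>
        (\<forall>\<zeta>. rat_fun p q \<zeta> = t \<longrightarrow> rat_fun p q (sphere_reflect \<zeta>) \<in> Some ` \<Omega>))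
     \<and>
     (\<forall>w \<in> \<Gamma>. Some w \<notin> B \<longrightarrow>
        card {\<zeta>. rat_fun p q \<zeta> = Some w} = n \<and>
        (\<exists>!\<zeta>. rat_fun p q \<zeta> = Some w \<and> rat_fun p q (sphere_reflect \<zeta>) \<in> Some ` \<Gamma>) \<and>
        (\<forall>\<zeta>. rat_fun p q \<zeta> = Some w \<and> rat_fun p q (sphere_reflect \<zeta>) \<in> Some ` \<Gamma>
              \<longrightarrow> rat_fun p q (sphere_reflect \<zeta>) = Some w) \<and>
        (\<forall>\<zeta>. rat_fun p q \<zeta> = Some w \<and> rat_fun p q (sphere_reflect \<zeta>) \<notin> Some ` \<Gamma>
              \<longrightarrow> rat_fun p q (sphere_reflect \<zeta>) \<in> Some ` \<Omega>))"
proof -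
  have disc_no_poles: "\<And>z. cmod z \<le> 1 \<Longrightarrow> poly q z \<noteq> 0"
    using no_poles U_sup by auto
  have inj: "inj_on \<phi> (cball 0 1)"
    using univalent U_sup by (rule inj_on_subset)
  have "\<phi> ` closure (ball 0 1) \<subseteq> closure \<Omega>"
    unfolding \<Omega>_def \<phi>_def
    by (intro image_closure_subset continuous_intros closure_subset) (use disc_no_poles in auto)
  then have closed_disc_image: "\<phi> ` cball 0 1 \<subseteq> closure \<Omega>" by simp
  have reflection_in_\<Omega>: "rat_fun p q (sphere_reflect \<zeta>) \<in> Some ` \<Omega>"
    if "rat_fun p q \<zeta> \<notin> Some ` closure \<Omega>" for \<zeta>
    using rat_fun_or_reflect_in_disc_image[of q p \<zeta>, OF disc_no_poles] that closed_disc_image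
    unfolding \<phi>_def \<Omega>_def by blast
  have card_fibre: "card {\<zeta>. rat_fun p q \<zeta> = Some w} = n" if "Some w \<notin> B" for w
  proof -
    have "p \<noteq> smult w q"
      by (rule ne_smult_if_inj_on_quotient[OF inj[unfolded \<phi>_def], of 0 "1/2"])
        (auto simp: disc_no_poles)
    from this that show ?thesis
      unfolding B_def n_def by (rule card_rat_fun_fibre_eq_rat_degree[OF q_nz])
  qed
  show ?thesis
    using reflection_in_\<Omega> card_fibre reflections_of_fibre_over_circle[OF disc_no_poles inj[unfolded \<phi>_def]]
    unfolding \<phi>_def \<Gamma>_def \<Omega>_def by blast
qed

end
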